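(* Let $T=(T_{r,k})_{r,k\ge 0}$ be a number triangle with arithmetic sequences on all major and minor diagonals, i.e. there are integers $c_r$ ($r\ge 0$) and $b_k$ ($k\ge 0$) such that $T_{r,k}=T_{r,0}+kc_r$ and $T_{r,k}=T_{0,k}+rb_k$ for all $r,k\ge 0$. Then there exists $d\in\mathbb{Z}$ such that $d=c_r-c_{r-1}=b_k-b_{k-1}$ for all $r,k\ge 1$.
   Context: A number triangle is an array of integers $T_{r,k}$ indexed by integers $r,k\ge 0$, arranged so that row $n$ consists of entries with $r+k=n$. The $r$-th major diagonal is the sequence $(T_{r,k})_{k\ge 0}$ and the $k$-th minor diagonal is the sequence $(T_{r,k})_{r\ge 0}$. *)

theory Defs
  imports Main
begin

end

theory Submission
  imports Defs
begin

(* Walking from T 0 0 to T r k first along the minor diagonal 0 and then along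
   the major diagonal r, or first along the major diagonal 0 and then along the
   minor diagonal k, gives r b_0 + k c_r = k c_0 + r b_k.  For k = 1 this says
   that c is arithmetic with difference b_1 - b_0, for r = 1 that b is
   arithmetic with difference c_1 - c_0, and for r = k = 1 that these two
   differences agree. *)

lemma triangle_two_paths:
  fixes T :: "nat \<Rightarrow> nat \<Rightarrow> 'a::comm_ring_1" and c b :: "nat \<Rightarrow> 'a"
  assumes major: "\<And>r k. T r k = T r 0 + of_nat k * c r"
    and minor: "\<And>r k. T r k = T 0 k + of_nat r * b k"
  shows "of_nat r * b 0 + of_nat k * c r = of_nat k * c 0 + of_nat r * b k"
proof -
  have "T 0 0 + of_nat r * b 0 + of_nat k * c r = T r k"
    using major[of r k] minor[of r 0] by simp
  also have "\<dots> = T 0 0 + of_nat k * c 0 + of_nat r * b k"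
    using minor[of r k] major[of 0 k] by simp
  finally show ?thesis
    by (simp add: add.assoc)
qed

lemma triangle_major_steps_linear:
  fixes T :: "nat \<Rightarrow> nat \<Rightarrow> 'a::comm_ring_1" and c b :: "nat \<Rightarrow> 'a"
  assumes major: "\<And>r k. T r k = T r 0 + of_nat k * c r"
    and minor: "\<And>r k. T r k = T 0 k + of_nat r * b k"
  shows "c r = c 0 + of_nat r * (b 1 - b 0)"
  using triangle_two_paths[OF major minor, of r 1] by (simp add: algebra_simps)

lemma triangle_minor_steps_linear:
  fixes T :: "nat \<Rightarrow> nat \<Rightarrow> 'a::comm_ring_1" and c b :: "nat \<Rightarrow> 'a"
  assumes major: "\<And>r k. T r k = T r 0 + of_nat k * c r"
    and minor: "\<And>r k. T r k = T 0 k + of_nat r * b k"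
  shows "b k = b 0 + of_nat k * (c 1 - c 0)"
  using triangle_two_paths[OF major minor, of 1 k] by (simp add: algebra_simps)

lemma linear_seq_diff:
  fixes f :: "nat \<Rightarrow> 'a::comm_ring_1"
  assumes "\<And>n. f n = f 0 + of_nat n * d" and "n \<ge> 1"
  shows "f n - f (n - 1) = d"
proof -
  obtain m where "n = Suc m"
    using \<open>n \<ge> 1\<close> by (cases n) auto
  then show ?thesis
    using assms(1)[of n] assms(1)[of m] by (simp add: algebra_simps)
qed

theorem mainTheorem5:
  fixes T :: "nat \<Rightarrow> nat \<Rightarrow> int" and c b :: "nat \<Rightarrow> int"
  assumes major: "\<And>r k. T r k = T r 0 + int k * c r"
    and minor: "\<And>r k. T r k = T 0 k + int r * b k"
  shows "\<exists>d::int. \<forall>r k. r \<ge> 1 \<longrightarrow> k \<ge> 1 \<longrightarrow>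
           d = c r - c (r - 1) \<and> d = b k - b (k - 1)"
proof (intro exI allI impI conjI)
  have c_linear: "c r = c 0 + int r * (b 1 - b 0)" for r
    by (rule triangle_major_steps_linear[OF major minor])
  have b_linear: "b k = b 0 + int k * (c 1 - c 0)" for k
    by (rule triangle_minor_steps_linear[OF major minor])
  have same_step: "b 1 - b 0 = c 1 - c 0"
    using b_linear[of 1] by simp
  fix r k :: nat
  assume "r \<ge> 1" and "k \<ge> 1"
  show "c 1 - c 0 = c r - c (r - 1)"
    using linear_seq_diff[OF c_linear \<open>r \<ge> 1\<close>] same_step by simp
  show "c 1 - c 0 = b k - b (k - 1)"
    using linear_seq_diff[OF b_linear \<open>k \<ge> 1\<close>] by simp
qed

end
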